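(* Let $(E,C)$ be a configuration structure (a set $E$ together with $C\subseteq\mathcal{P}(E)$). Define the event structure $\mathcal{E}(C)=(E,\vdash)$ by $X\vdash Y$ iff $X\cap Y=\emptyset$ and $X\cup Y\in C$ (for $X,Y\subseteq E$). Then $\mathcal{E}(C)$ is pure, and the set of left-closed configurations of $\mathcal{E}(C)$ equals $C$.
   Context: An event structure is a pair $(E,\vdash)$ with $E$ a set and $\vdash\subseteq\mathcal{P}(E)\times\mathcal{P}(E)$. It is pure if $X\vdash Y$ implies $X\cap Y=\emptyset$. A set $X\subseteq E$ is a left-closed configuration of $(E,\vdash)$ iff for every $Y\subseteq X$ there is $Z\subseteq X$ with $Z\vdash Y$. *)

theory Defs
  imports Main
begin

text \<open>An event structure on E is a relation (enabling) between subsets of E,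
  represented as a set of pairs (X, Y) meaning X enables Y.\<close>

definition event_structure :: "'a set \<Rightarrow> ('a set \<times> 'a set) set \<Rightarrow> bool" where
  "event_structure E ent \<longleftrightarrow> ent \<subseteq> Pow E \<times> Pow E"

definition pure_es :: "('a set \<times> 'a set) set \<Rightarrow> bool" where
  "pure_es ent \<longleftrightarrow> (\<forall>X Y. (X, Y) \<in> ent \<longrightarrow> X \<inter> Y = {})"

definition left_closed_config :: "'a set \<Rightarrow> ('a set \<times> 'a set) set \<Rightarrow> 'a set \<Rightarrow> bool" where
  "left_closed_config E ent X \<longleftrightarrow>
     X \<subseteq> E \<and> (\<forall>Y. Y \<subseteq> X \<longrightarrow> (\<exists>Z. Z \<subseteq> X \<and> (Z, Y) \<in> ent))"

definition es_of_config :: "'a set \<Rightarrow> 'a set set \<Rightarrow> ('a set \<times> 'a set) set" where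
  "es_of_config E C = {(X, Y). X \<subseteq> E \<and> Y \<subseteq> E \<and> X \<inter> Y = {} \<and> X \<union> Y \<in> C}"

end

theory Submission
  imports Defs
begin

text \<open>Taking Y = X shows that a left-closed configuration X of E(C) is enabled by some
  Z \<subseteq> X with Z \<union> X \<in> C, i.e. X \<in> C; conversely every Y \<subseteq> X \<in> C is enabled by X - Y.\<close>

lemma event_structure_es_of_config: "event_structure E (es_of_config E C)"
  by (auto simp: event_structure_def es_of_config_def)

lemma pure_es_of_config: "pure_es (es_of_config E C)"
  by (auto simp: pure_es_def es_of_config_def)

lemma left_closed_config_es_of_config_imp_mem:
  assumes "left_closed_config E (es_of_config E C) X"
  shows "X \<in> C"
proof -
  obtain Z where "Z \<subseteq> X" "(Z, X) \<in> es_of_config E C"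
    using assms unfolding left_closed_config_def by blast
  then have "Z \<union> X \<in> C" "Z \<union> X = X"
    by (auto simp: es_of_config_def)
  then show ?thesis by simp
qed

lemma mem_imp_left_closed_config_es_of_config:
  assumes "X \<in> C" and "X \<subseteq> E"
  shows "left_closed_config E (es_of_config E C) X"
  unfolding left_closed_config_def
proof (intro conjI allI impI)
  fix Y assume "Y \<subseteq> X"
  then have "(X - Y, Y) \<in> es_of_config E C"
    using assms by (auto simp: es_of_config_def Un_absorb2)
  then show "\<exists>Z. Z \<subseteq> X \<and> (Z, Y) \<in> es_of_config E C"
    by blast
qed (fact \<open>X \<subseteq> E\<close>)

lemma left_closed_configs_es_of_config:
  assumes "C \<subseteq> Pow E"
  shows "{X. left_closed_config E (es_of_config E C) X} = C"
proof (intro equalityI subsetI)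
  fix X assume "X \<in> C"
  with assms show "X \<in> {X. left_closed_config E (es_of_config E C) X}"
    by (auto intro: mem_imp_left_closed_config_es_of_config)
qed (auto dest: left_closed_config_es_of_config_imp_mem)

theorem mainTheorem2:
  fixes E :: "'a set" and C :: "'a set set"
  assumes "C \<subseteq> Pow E"
  shows "event_structure E (es_of_config E C)
    \<and> pure_es (es_of_config E C)
    \<and> {X. left_closed_config E (es_of_config E C) X} = C"
  using event_structure_es_of_config[of E C] pure_es_of_config[of E C]
    left_closed_configs_es_of_config[OF assms]
  by blast

end
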